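(* Let $R$ be an $L$-layered domain$^\dagger$ (in particular $R$ is $\nu$-bipotent) whose tangible layer $R_1$ is a finite set. Then either $1\in L$ is infinite (i.e. $1+1=1$ in $L$), or the $\nu$-relation is trivial on $R_1$, in the sense that $a\cong_\nu \mathbb{1}_R$ for all $a\in R_1$.
   Context: A semiring$^\dagger$ is a structure $(L,+,\cdot,1)$ with $(L,\cdot,1)$ a monoid, $(L,+)$ an abelian semigroup, and two-sided distributivity (no zero element required). Let $L$ be a semiring$^\dagger$ with a designated sub-semiring$^\dagger$ $L_+$ of positive elements ($1\in L_+$); write $k\ge \ell$ iff $k=\ell$ or $k=\ell+p$ for some $p\in L_+$, assumed to be a partial order. An element $\ell\in L$ is finite if $\ell+m\neq\ell$ for all $m\in L_+$, and infinite otherwise. An $L$-quasi-layered domain$^\dagger$ is a commutative semiring$^\dagger$ $R$ with a decomposition into disjoint subsets $R=\bigsqcup_{\ell\in L}R_\ell$ and sort transition maps $\nu_{m,\ell}:R_\ell\to R_m$ for $m\ge\ell$, with $\nu_{\ell,\ell}=\mathrm{id}$, $\nu_{m,\ell}\circ\nu_{\ell,k}=\nu_{m,k}$, satisfying: (A1) $\mathbb{1}_R\in R_1$; (A2) $R_kR_\ell\subseteq R_{k\ell}$; (A3) $\nu_{m,k}(a)\nu_{m',\ell}(b)=\nu_{mm',k\ell}(ab)$ for $a\in R_k,b\in R_\ell$, $m\ge k,m'\ge\ell$; (A4) $\nu_{\ell,k}(a)+\nu_{\ell',k}(a)=\nu_{\ell+\ell',k}(a)$; (B) if $a\in R_k$,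 $b\in R_\ell$, $a\cong_\nu b$ then $a+b\in R_{k+\ell}$, $a+b\cong_\nu a$, and $a+b=a$ if $k$ is infinite. Here $a\cong_\nu b$ ($a\in R_k,b\in R_\ell$) means $\nu_{m,k}(a)=\nu_{m,\ell}(b)$ for some $m\ge k,\ell$; $a\le_\nu b$ means $a+b\cong_\nu b$; $a<_\nu b$ means $a\le_\nu b$ and $a\not\cong_\nu b$. $R$ is an $L$-layered domain$^\dagger$ if it is $\nu$-bipotent: for $a\not\cong_\nu b$ either $a<_\nu b$ or $b<_\nu a$, and $a<_\nu b$ implies $a+b=b$. Elements of $R_1$ are called tangible. *)

theory Defs
  imports Main
begin

text \<open>The semiring-dagger L is a type of class semiring (abelian additive semigroup,
  multiplicative semigroup, two-sided distributivity, no zero) together with monoid_mult.  The disjoint decomposition of R into layers R_l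
  is encoded by the layer function lay, with R_l = {a. lay a = l}.
  The sort transition maps are nu m l (meaningful on R_l for m >= l).\<close>

definition L_ge :: "'l::semiring set \<Rightarrow> 'l \<Rightarrow> 'l \<Rightarrow> bool" where
  "L_ge Lp k l \<longleftrightarrow> k = l \<or> (\<exists>p\<in>Lp. k = l + p)"

definition L_finite :: "'l::semiring set \<Rightarrow> 'l \<Rightarrow> bool" where
  "L_finite Lp l \<longleftrightarrow> (\<forall>m\<in>Lp. l + m \<noteq> l)"

definition nu_cong :: "'l::semiring set \<Rightarrow> ('r \<Rightarrow> 'l) \<Rightarrow> ('l \<Rightarrow> 'l \<Rightarrow> 'r \<Rightarrow> 'r) \<Rightarrow> 'r \<Rightarrow> 'r \<Rightarrow> bool" where
  "nu_cong Lp lay nu a b \<longleftrightarrow>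
     (\<exists>m. L_ge Lp m (lay a) \<and> L_ge Lp m (lay b) \<and> nu m (lay a) a = nu m (lay b) b)"

definition nu_le :: "'l::semiring set \<Rightarrow> ('r::semiring \<Rightarrow> 'l) \<Rightarrow> ('l \<Rightarrow> 'l \<Rightarrow> 'r \<Rightarrow> 'r) \<Rightarrow> 'r \<Rightarrow> 'r \<Rightarrow> bool" where
  "nu_le Lp lay nu a b \<longleftrightarrow> nu_cong Lp lay nu (a + b) b"

definition nu_less :: "'l::semiring set \<Rightarrow> ('r::semiring \<Rightarrow> 'l) \<Rightarrow> ('l \<Rightarrow> 'l \<Rightarrow> 'r \<Rightarrow> 'r) \<Rightarrow> 'r \<Rightarrow> 'r \<Rightarrow> bool" where
  "nu_less Lp lay nu a b \<longleftrightarrow> nu_le Lp lay nu a b \<and> \<not> nu_cong Lp lay nu a b"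

definition positive_set :: "'l::{semiring,monoid_mult} set \<Rightarrow> bool" where
  "positive_set Lp \<longleftrightarrow>
     1 \<in> Lp \<and> (\<forall>p\<in>Lp. \<forall>q\<in>Lp. p + q \<in> Lp \<and> p * q \<in> Lp) \<and>
     (\<forall>k. L_ge Lp k k) \<and>
     (\<forall>k l m. L_ge Lp k l \<longrightarrow> L_ge Lp l m \<longrightarrow> L_ge Lp k m) \<and>
     (\<forall>k l. L_ge Lp k l \<longrightarrow> L_ge Lp l k \<longrightarrow> k = l)"

definition quasi_layered_domain ::
  "'l::{semiring,monoid_mult} set \<Rightarrow> ('r::{comm_semiring,comm_monoid_mult} \<Rightarrow> 'l)
     \<Rightarrow> ('l \<Rightarrow> 'l \<Rightarrow> 'r \<Rightarrow> 'r) \<Rightarrow> bool" where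
  "quasi_layered_domain Lp lay nu \<longleftrightarrow>
     positive_set Lp \<and>
     \<comment> \<open>sort transition maps nu m l : R_l -> R_m for m >= l\<close>
     (\<forall>a m. L_ge Lp m (lay a) \<longrightarrow> lay (nu m (lay a) a) = m) \<and>
     (\<forall>a. nu (lay a) (lay a) a = a) \<and>
     (\<forall>a l m. L_ge Lp l (lay a) \<longrightarrow> L_ge Lp m l \<longrightarrow> nu m l (nu l (lay a) a) = nu m (lay a) a) \<and>
     \<comment> \<open>(A1)\<close>
     lay 1 = 1 \<and>
     \<comment> \<open>(A2)\<close>
     (\<forall>a b. lay (a * b) = lay a * lay b) \<and>
     \<comment> \<open>(A3)\<close>
     (\<forall>a b m m'. L_ge Lp m (lay a) \<longrightarrow> L_ge Lp m' (lay b) \<longrightarrow>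
        nu m (lay a) a * nu m' (lay b) b = nu (m * m') (lay a * lay b) (a * b)) \<and>
     \<comment> \<open>(A4)\<close>
     (\<forall>a l l'. L_ge Lp l (lay a) \<longrightarrow> L_ge Lp l' (lay a) \<longrightarrow>
        nu l (lay a) a + nu l' (lay a) a = nu (l + l') (lay a) a) \<and>
     \<comment> \<open>(B)\<close>
     (\<forall>a b. nu_cong Lp lay nu a b \<longrightarrow>
        lay (a + b) = lay a + lay b \<and> nu_cong Lp lay nu (a + b) a \<and>
        (\<not> L_finite Lp (lay a) \<longrightarrow> a + b = a))"

definition layered_domain ::
  "'l::{semiring,monoid_mult} set \<Rightarrow> ('r::{comm_semiring,comm_monoid_mult} \<Rightarrow> 'l)
     \<Rightarrow> ('l \<Rightarrow> 'l \<Rightarrow> 'r \<Rightarrow> 'r) \<Rightarrow> bool" where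
  "layered_domain Lp lay nu \<longleftrightarrow>
     quasi_layered_domain Lp lay nu \<and>
     (\<forall>a b. \<not> nu_cong Lp lay nu a b \<longrightarrow> nu_less Lp lay nu a b \<or> nu_less Lp lay nu b a) \<and>
     (\<forall>a b. nu_less Lp lay nu a b \<longrightarrow> a + b = b)"

end

theory Submission
  imports Defs
begin

text \<open>Suppose 1 is finite in L and a is tangible with a not \<nu>-equivalent to 1. By
  \<nu>-bipotence, a + 1 equals a or 1, and then by induction a^m + 1 equals a^m resp. 1
  for every m > 0. Since the tangible layer is finite and closed under multiplication,
  some power repeats: a^(k+d) = a^k with d > 0. Hence e = a^k is a tangible additive idempotent, and axiom (B) applied to e and e
  gives 1 = lay (e + e) = 1 + 1, contradicting finiteness of 1.\<close>

lemma power_Suc_add_one_eq_one: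
  fixes a :: "'a::{semiring,monoid_mult}"
  assumes "a + 1 = 1"
  shows "a ^ Suc n + 1 = 1"
proof (induction n)
  case (Suc n)
  have "a ^ Suc (Suc n) + 1 = a ^ Suc (Suc n) + (a + 1)"
    by (simp only: assms)
  also have "\<dots> = a * (a ^ Suc n + 1) + 1"
    by (simp only: distrib_left mult_1_right add.assoc power_Suc[of a "Suc n"])
  also have "\<dots> = 1"
    by (simp only: Suc.IH mult_1_right assms)
  finally show ?case .
qed (simp add: assms)

lemma power_Suc_add_one_eq_power:
  fixes a :: "'a::{semiring,monoid_mult}"
  assumes "a + 1 = a"
  shows "a ^ Suc n + 1 = a ^ Suc n"
proof (induction n)
  case (Suc n)
  have absorb: "a ^ Suc (Suc n) + a = a ^ Suc (Suc n)"
    using Suc.IH by (metis distrib_left mult_1_right power_Suc)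
  have "a ^ Suc (Suc n) + 1 = (a ^ Suc (Suc n) + a) + 1"
    by (simp only: absorb)
  also have "\<dots> = a ^ Suc (Suc n) + a"
    by (simp only: add.assoc assms)
  also have "\<dots> = a ^ Suc (Suc n)"
    by (rule absorb)
  finally show ?case .
qed (simp add: assms)

lemma power_idempotent_if_cycle:
  fixes a :: "'a::{semiring,monoid_mult}"
  assumes "a + 1 = a \<or> a + 1 = 1"
    and cycle: "a ^ (k + Suc d) = a ^ k"
  shows "a ^ k + a ^ k = a ^ k"
proof -
  have "a ^ k + a ^ k = a ^ k * (a ^ Suc d + 1)"
    by (simp only: distrib_left mult_1_right power_add[symmetric] cycle)
  also have "\<dots> = a ^ k"
    using assms(1)
  proof
    assume "a + 1 = a"
    then show ?thesis
      by (simp only: power_Suc_add_one_eq_power power_add[symmetric] cycle)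
  next
    assume "a + 1 = 1"
    then show ?thesis
      by (simp only: power_Suc_add_one_eq_one mult_1_right)
  qed
  finally show ?thesis .
qed

lemma power_cycle_if_finite_powers:
  fixes a :: "'a::monoid_mult"
  assumes "finite (range (\<lambda>n::nat. a ^ n))"
  obtains k d where "a ^ (k + Suc d) = a ^ k"
proof -
  have "\<not> inj (\<lambda>n::nat. a ^ n)"
    using assms finite_imageD infinite_UNIV_nat by blast
  then obtain i j :: nat where "i < j" "a ^ i = a ^ j"
    unfolding inj_def by (metis linorder_neqE_nat)
  moreover from \<open>i < j\<close> obtain d where "j = i + Suc d"
    using less_imp_Suc_add by fastforce
  ultimately show thesis using that by metis
qed

lemma nu_cong_refl: "nu_cong Lp lay nu a a"
  unfolding nu_cong_def L_ge_def by blast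

context
  fixes Lp :: "'l::{semiring,monoid_mult} set"
    and lay :: "'r::{comm_semiring,comm_monoid_mult} \<Rightarrow> 'l"
    and nu :: "'l \<Rightarrow> 'l \<Rightarrow> 'r \<Rightarrow> 'r"
  assumes Q: "quasi_layered_domain Lp lay nu"
begin

lemma lay_one: "lay 1 = 1"
  using Q unfolding quasi_layered_domain_def by (elim conjE)

lemma lay_mult: "lay (a * b) = lay a * lay b"
  using Q unfolding quasi_layered_domain_def by (elim conjE) simp

lemma lay_power: "lay (a ^ n) = lay a ^ n"
  by (induction n) (simp_all add: lay_one lay_mult)

lemma lay_add_if_nu_cong:
  assumes "nu_cong Lp lay nu a b"
  shows "lay (a + b) = lay a + lay b"
proof -
  have "\<forall>a b. nu_cong Lp lay nu a b \<longrightarrow>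
      lay (a + b) = lay a + lay b \<and> nu_cong Lp lay nu (a + b) a \<and>
      (\<not> L_finite Lp (lay a) \<longrightarrow> a + b = a)"
    using Q unfolding quasi_layered_domain_def by (elim conjE)
  then show ?thesis using assms by simp
qed

lemma one_positive: "1 \<in> Lp"
proof -
  have "positive_set Lp"
    using Q unfolding quasi_layered_domain_def by (elim conjE)
  then show ?thesis unfolding positive_set_def by (elim conjE)
qed

lemma finite_tangible_power_cycle:
  assumes "finite {a. lay a = 1}" and "lay a = 1"
  obtains k d where "a ^ (k + Suc d) = a ^ k"
proof (rule power_cycle_if_finite_powers)
  show "finite (range (\<lambda>n::nat. a ^ n))"
    by (rule finite_subset[OF _ assms(1)]) (auto simp: lay_power assms(2))
qed

end

lemma layered_domain_add_not_nu_cong: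
  assumes "layered_domain Lp lay nu" and "\<not> nu_cong Lp lay nu a b"
  shows "a + b = a \<or> a + b = b"
  using assms unfolding layered_domain_def by (metis add.commute)

theorem corollary3p15:
  fixes Lp :: "'l::{semiring,monoid_mult} set"
    and lay :: "'r::{comm_semiring,comm_monoid_mult} \<Rightarrow> 'l"
    and nu :: "'l \<Rightarrow> 'l \<Rightarrow> 'r \<Rightarrow> 'r"
  assumes "layered_domain Lp lay nu"
    and "finite {a. lay a = 1}"
  shows "\<not> L_finite Lp 1 \<or> (\<forall>a. lay a = 1 \<longrightarrow> nu_cong Lp lay nu a 1)"
proof (rule ccontr)
  assume "\<not> ?thesis"
  then obtain a where fin: "L_finite Lp 1" and a: "lay a = 1" "\<not> nu_cong Lp lay nu a 1"
    by blast
  have Q: "quasi_layered_domain Lp lay nu"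
    using assms(1) unfolding layered_domain_def by blast
  obtain k d where cycle: "a ^ (k + Suc d) = a ^ k"
    using finite_tangible_power_cycle[OF Q assms(2) a(1)] .
  have "a ^ k + a ^ k = a ^ k"
    using power_idempotent_if_cycle[OF layered_domain_add_not_nu_cong[OF assms(1) a(2)] cycle] .
  then have "(1::'l) + 1 = 1"
    using lay_add_if_nu_cong[OF Q nu_cong_refl, of "a ^ k"] lay_power[OF Q] a(1) by simp
  then show False
    using fin one_positive[OF Q] unfolding L_finite_def by blast
qed

end
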